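(* Let $((\mathcal{S},\mathcal{T}),(\mathcal{U},\mathcal{V}))$ be a twin cotorsion pair on a triangulated category $\mathcal{C}$, and put $\mathcal{W}=\mathcal{U}\cap\mathcal{T}$, $\mathcal{C}^+=\mathcal{W}*\mathcal{V}[1]$, $\mathcal{C}^-=\mathcal{S}[-1]*\mathcal{W}$, $\mathcal{H}=\mathcal{C}^+\cap\mathcal{C}^-$. Then $\mathcal{H}\cap(\mathcal{U}*\mathcal{T})=\mathcal{W}$.
   Context: For full subcategories $\mathcal{X},\mathcal{Y}$, $\mathcal{X}*\mathcal{Y}$ is the full subcategory of objects $C$ admitting a distinguished triangle $X\to C\to Y\to X[1]$ with $X\in\mathcal{X}$, $Y\in\mathcal{Y}$. A cotorsion pair $(\mathcal{A},\mathcal{B})$: full subcategories closed under isomorphisms, finite direct sums and summands with $\mathcal{C}=\mathcal{A}*\mathcal{B}[1]$ and $\mathcal{C}(\mathcal{A},\mathcal{B}[1])=0$. A twin cotorsion pair $((\mathcal{S},\mathcal{T}),(\mathcal{U},\mathcal{V}))$ consists of two cotorsion pairs with $\mathcal{C}(\mathcal{S},\mathcal{V}[1])=0$. *)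

theory Defs
  imports Main
begin

text \<open>A (small) additive category with an automorphism (the shift [1], with inverse [-1])
and a class of distinguished triangles. Composition: cmp C g f means g after f.\<close>

record ('o, 'm) tricat =
  Obj   :: "'o set"
  Mor   :: "'m set"
  dom   :: "'m \<Rightarrow> 'o"
  cod   :: "'m \<Rightarrow> 'o"
  cmp   :: "'m \<Rightarrow> 'm \<Rightarrow> 'm"
  idm   :: "'o \<Rightarrow> 'm"
  madd  :: "'m \<Rightarrow> 'm \<Rightarrow> 'm"
  mzero :: "'o \<Rightarrow> 'o \<Rightarrow> 'm"
  mneg  :: "'m \<Rightarrow> 'm"
  shO   :: "'o \<Rightarrow> 'o"
  shM   :: "'m \<Rightarrow> 'm"
  ushO  :: "'o \<Rightarrow> 'o"
  ushM  :: "'m \<Rightarrow> 'm"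
  dist  :: "('o \<times> 'o \<times> 'o \<times> 'm \<times> 'm \<times> 'm) set"

definition hom :: "('o, 'm, 'x) tricat_scheme \<Rightarrow> 'o \<Rightarrow> 'o \<Rightarrow> 'm set" where
  "hom C X Y = {f \<in> Mor C. dom C f = X \<and> cod C f = Y}"

definition category :: "('o, 'm, 'x) tricat_scheme \<Rightarrow> bool" where
  "category C \<longleftrightarrow>
     (\<forall>f\<in>Mor C. dom C f \<in> Obj C \<and> cod C f \<in> Obj C) \<and>
     (\<forall>X\<in>Obj C. idm C X \<in> hom C X X) \<and>
     (\<forall>X Y Z f g. f \<in> hom C X Y \<longrightarrow> g \<in> hom C Y Z \<longrightarrow> cmp C g f \<in> hom C X Z) \<and>
     (\<forall>W X Y Z f g h. f \<in> hom C W X \<longrightarrow> g \<in> hom C X Y \<longrightarrow> h \<in> hom C Y Z \<longrightarrow>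
        cmp C h (cmp C g f) = cmp C (cmp C h g) f) \<and>
     (\<forall>X Y f. f \<in> hom C X Y \<longrightarrow> cmp C f (idm C X) = f \<and> cmp C (idm C Y) f = f)"

definition preadditive :: "('o, 'm, 'x) tricat_scheme \<Rightarrow> bool" where
  "preadditive C \<longleftrightarrow> category C \<and>
     (\<forall>X\<in>Obj C. \<forall>Y\<in>Obj C.
        mzero C X Y \<in> hom C X Y \<and>
        (\<forall>f\<in>hom C X Y. \<forall>g\<in>hom C X Y. madd C f g \<in> hom C X Y) \<and>
        (\<forall>f\<in>hom C X Y. mneg C f \<in> hom C X Y) \<and>
        (\<forall>f\<in>hom C X Y. \<forall>g\<in>hom C X Y. \<forall>h\<in>hom C X Y.
            madd C (madd C f g) h = madd C f (madd C g h)) \<and>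
        (\<forall>f\<in>hom C X Y. \<forall>g\<in>hom C X Y. madd C f g = madd C g f) \<and>
        (\<forall>f\<in>hom C X Y. madd C (mzero C X Y) f = f) \<and>
        (\<forall>f\<in>hom C X Y. madd C f (mneg C f) = mzero C X Y)) \<and>
     (\<forall>X Y Z f g g'. f \<in> hom C X Y \<longrightarrow> g \<in> hom C Y Z \<longrightarrow> g' \<in> hom C Y Z \<longrightarrow>
        cmp C (madd C g g') f = madd C (cmp C g f) (cmp C g' f)) \<and>
     (\<forall>X Y Z f f' g. f \<in> hom C X Y \<longrightarrow> f' \<in> hom C X Y \<longrightarrow> g \<in> hom C Y Z \<longrightarrow>
        cmp C g (madd C f f') = madd C (cmp C g f) (cmp C g f'))"

definition iso :: "('o, 'm, 'x) tricat_scheme \<Rightarrow> 'm \<Rightarrow> bool" where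
  "iso C f \<longleftrightarrow> f \<in> Mor C \<and> (\<exists>g\<in>hom C (cod C f) (dom C f).
      cmp C g f = idm C (dom C f) \<and> cmp C f g = idm C (cod C f))"

definition zero_obj :: "('o, 'm, 'x) tricat_scheme \<Rightarrow> 'o \<Rightarrow> bool" where
  "zero_obj C Z \<longleftrightarrow> Z \<in> Obj C \<and> idm C Z = mzero C Z Z"

definition biprod :: "('o, 'm, 'x) tricat_scheme \<Rightarrow> 'o \<Rightarrow> 'o \<Rightarrow> 'o \<Rightarrow> 'm \<Rightarrow> 'm \<Rightarrow> 'm \<Rightarrow> 'm \<Rightarrow> bool" where
  "biprod C X Y P p1 p2 i1 i2 \<longleftrightarrow>
     X \<in> Obj C \<and> Y \<in> Obj C \<and> P \<in> Obj C \<and>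
     p1 \<in> hom C P X \<and> p2 \<in> hom C P Y \<and> i1 \<in> hom C X P \<and> i2 \<in> hom C Y P \<and>
     cmp C p1 i1 = idm C X \<and> cmp C p2 i2 = idm C Y \<and>
     madd C (cmp C i1 p1) (cmp C i2 p2) = idm C P"

definition additive :: "('o, 'm, 'x) tricat_scheme \<Rightarrow> bool" where
  "additive C \<longleftrightarrow> preadditive C \<and> (\<exists>Z. zero_obj C Z) \<and>
     (\<forall>X\<in>Obj C. \<forall>Y\<in>Obj C. \<exists>P p1 p2 i1 i2. biprod C X Y P p1 p2 i1 i2)"

definition shift_auto :: "('o, 'm, 'x) tricat_scheme \<Rightarrow> bool" where
  "shift_auto C \<longleftrightarrow>
     (\<forall>X\<in>Obj C. shO C X \<in> Obj C \<and> ushO C X \<in> Obj C \<and>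
        ushO C (shO C X) = X \<and> shO C (ushO C X) = X) \<and>
     (\<forall>X Y f. f \<in> hom C X Y \<longrightarrow> shM C f \<in> hom C (shO C X) (shO C Y) \<and>
        ushM C f \<in> hom C (ushO C X) (ushO C Y)) \<and>
     (\<forall>f\<in>Mor C. ushM C (shM C f) = f \<and> shM C (ushM C f) = f) \<and>
     (\<forall>X Y Z f g. f \<in> hom C X Y \<longrightarrow> g \<in> hom C Y Z \<longrightarrow>
        shM C (cmp C g f) = cmp C (shM C g) (shM C f)) \<and>
     (\<forall>X\<in>Obj C. shM C (idm C X) = idm C (shO C X)) \<and>
     (\<forall>X Y f g. f \<in> hom C X Y \<longrightarrow> g \<in> hom C X Y \<longrightarrow>
        shM C (madd C f g) = madd C (shM C f) (shM C g))"

definition triangle :: "('o, 'm, 'x) tricat_scheme \<Rightarrow> 'o \<times> 'o \<times> 'o \<times> 'm \<times> 'm \<times> 'm \<Rightarrow> bool" where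
  "triangle C t \<longleftrightarrow> (case t of (X, Y, Z, f, g, h) \<Rightarrow>
     f \<in> hom C X Y \<and> g \<in> hom C Y Z \<and> h \<in> hom C Z (shO C X))"

definition tri_mor :: "('o, 'm, 'x) tricat_scheme \<Rightarrow> 'o \<times> 'o \<times> 'o \<times> 'm \<times> 'm \<times> 'm \<Rightarrow>
    'o \<times> 'o \<times> 'o \<times> 'm \<times> 'm \<times> 'm \<Rightarrow> 'm \<Rightarrow> 'm \<Rightarrow> 'm \<Rightarrow> bool" where
  "tri_mor C t t' a b c \<longleftrightarrow> (case t of (X, Y, Z, f, g, h) \<Rightarrow> case t' of (X', Y', Z', f', g', h') \<Rightarrow>
     a \<in> hom C X X' \<and> b \<in> hom C Y Y' \<and> c \<in> hom C Z Z' \<and>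
     cmp C b f = cmp C f' a \<and> cmp C c g = cmp C g' b \<and> cmp C (shM C a) h = cmp C h' c)"

definition triangulated :: "('o, 'm, 'x) tricat_scheme \<Rightarrow> bool" where
  "triangulated C \<longleftrightarrow> additive C \<and> shift_auto C \<and>
     \<comment> \<open>distinguished triangles are triangles, closed under isomorphism\<close>
     (\<forall>t\<in>dist C. triangle C t) \<and>
     (\<forall>t t' a b c. t \<in> dist C \<longrightarrow> triangle C t' \<longrightarrow> tri_mor C t t' a b c \<longrightarrow>
        iso C a \<longrightarrow> iso C b \<longrightarrow> iso C c \<longrightarrow> t' \<in> dist C) \<and>
     \<comment> \<open>TR1\<close>
     (\<forall>X\<in>Obj C. \<forall>Z. zero_obj C Z \<longrightarrow>
        (X, X, Z, idm C X, mzero C X Z, mzero C Z (shO C X)) \<in> dist C) \<and>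
     (\<forall>X Y f. X \<in> Obj C \<longrightarrow> Y \<in> Obj C \<longrightarrow> f \<in> hom C X Y \<longrightarrow>
        (\<exists>Z g h. (X, Y, Z, f, g, h) \<in> dist C)) \<and>
     \<comment> \<open>TR2 (rotation)\<close>
     (\<forall>X Y Z f g h. (X, Y, Z, f, g, h) \<in> dist C \<longleftrightarrow>
        (Y, Z, shO C X, g, h, mneg C (shM C f)) \<in> dist C) \<and>
     \<comment> \<open>TR3 (completion of morphisms)\<close>
     (\<forall>X Y Z f g h X' Y' Z' f' g' h' a b.
        (X, Y, Z, f, g, h) \<in> dist C \<longrightarrow> (X', Y', Z', f', g', h') \<in> dist C \<longrightarrow>
        a \<in> hom C X X' \<longrightarrow> b \<in> hom C Y Y' \<longrightarrow> cmp C b f = cmp C f' a \<longrightarrow>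
        (\<exists>c. tri_mor C (X, Y, Z, f, g, h) (X', Y', Z', f', g', h') a b c)) \<and>
     \<comment> \<open>TR4 (octahedral axiom)\<close>
     (\<forall>X Y Z Z' X' Y' f g h1 j1 h2 j2 h3 j3.
        (X, Y, Z', f, h1, j1) \<in> dist C \<longrightarrow>
        (Y, Z, X', g, h2, j2) \<in> dist C \<longrightarrow>
        (X, Z, Y', cmp C g f, h3, j3) \<in> dist C \<longrightarrow>
        (\<exists>u v. (Z', Y', X', u, v, cmp C (shM C h1) j2) \<in> dist C \<and>
           cmp C u h1 = cmp C h3 g \<and> cmp C j3 u = j1 \<and>
           cmp C v h3 = h2 \<and> cmp C j2 v = cmp C (shM C f) j3))"

definition good_subcat :: "('o, 'm, 'x) tricat_scheme \<Rightarrow> 'o set \<Rightarrow> bool" where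
  "good_subcat C A \<longleftrightarrow> A \<subseteq> Obj C \<and>
     (\<forall>X Y f. X \<in> A \<longrightarrow> f \<in> hom C X Y \<longrightarrow> iso C f \<longrightarrow> Y \<in> A) \<and>
     (\<forall>Z. zero_obj C Z \<longrightarrow> Z \<in> A) \<and>
     (\<forall>X Y P p1 p2 i1 i2. biprod C X Y P p1 p2 i1 i2 \<longrightarrow>
        ((X \<in> A \<and> Y \<in> A) \<longleftrightarrow> P \<in> A))"

text \<open>X * Y: objects C admitting a distinguished triangle X0 -> C -> Y0 -> X0[1].\<close>
definition ext :: "('o, 'm, 'x) tricat_scheme \<Rightarrow> 'o set \<Rightarrow> 'o set \<Rightarrow> 'o set" where
  "ext C A B = {M \<in> Obj C. \<exists>X\<in>A. \<exists>Y\<in>B. \<exists>f g h. (X, M, Y, f, g, h) \<in> dist C}"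

definition shift_set :: "('o, 'm, 'x) tricat_scheme \<Rightarrow> 'o set \<Rightarrow> 'o set" where
  "shift_set C A = shO C ` A"

definition unshift_set :: "('o, 'm, 'x) tricat_scheme \<Rightarrow> 'o set \<Rightarrow> 'o set" where
  "unshift_set C A = ushO C ` A"

definition hom_vanish :: "('o, 'm, 'x) tricat_scheme \<Rightarrow> 'o set \<Rightarrow> 'o set \<Rightarrow> bool" where
  "hom_vanish C A B \<longleftrightarrow> (\<forall>X\<in>A. \<forall>Y\<in>B. hom C X Y = {mzero C X Y})"

definition cotorsion_pair :: "('o, 'm, 'x) tricat_scheme \<Rightarrow> 'o set \<Rightarrow> 'o set \<Rightarrow> bool" where
  "cotorsion_pair C A B \<longleftrightarrow> good_subcat C A \<and> good_subcat C B \<and>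
     Obj C = ext C A (shift_set C B) \<and> hom_vanish C A (shift_set C B)"

definition twin_cotorsion_pair ::
  "('o, 'm, 'x) tricat_scheme \<Rightarrow> 'o set \<Rightarrow> 'o set \<Rightarrow> 'o set \<Rightarrow> 'o set \<Rightarrow> bool" where
  "twin_cotorsion_pair C S T U V \<longleftrightarrow> cotorsion_pair C S T \<and> cotorsion_pair C U V \<and>
     hom_vanish C S (shift_set C V)"

end

theory Submission
  imports Defs
begin

text \<open>Let X lie in H and in U * T. Every morphism from X to V[1], V in V, vanishes: it kills
  the U-part of X, so it factors through the T-part; that map in turn vanishes on the S[-1]-part
  of X from C^-, hence factors through its W-part, and W is left orthogonal to V[1]. Thus the
  triangle U' -> X -> V'[1] from the pair (U,V) splits and X is a summand of U'. Dually, every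
  morphism from S[-1] to X vanishes, using the W * V[1] triangle of X from C^+, so X lies in T.
  Conversely W sits in all three extension classes by triangles with a zero object.\<close>

lemma hom_vanishD: "hom_vanish C A B \<Longrightarrow> X \<in> A \<Longrightarrow> Y \<in> B \<Longrightarrow> f \<in> hom C X Y \<Longrightarrow> f = mzero C X Y"
  unfolding hom_vanish_def by blast

lemma good_subcat_summands:
  assumes "good_subcat C A" "biprod C X Y P p1 p2 i1 i2" "P \<in> A"
  shows "X \<in> A" "Y \<in> A"
  using assms unfolding good_subcat_def by blast+

section \<open>Triangulated categories\<close>

locale triangulated_category =
  fixes C :: "('o, 'm, 'x) tricat_scheme"
  assumes triangulated: "triangulated C"
begin

lemma additive: "additive C" and shift_auto: "shift_auto C"
  using triangulated unfolding triangulated_def by simp_all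

lemma dist_triangle: "t \<in> dist C \<Longrightarrow> triangle C t"
  using triangulated unfolding triangulated_def by (elim conjE) blast

lemma dist_TR1: "X \<in> Obj C \<Longrightarrow> zero_obj C Z \<Longrightarrow>
        (X, X, Z, idm C X, mzero C X Z, mzero C Z (shO C X)) \<in> dist C"
  using triangulated unfolding triangulated_def by (elim conjE) blast

lemma dist_rotate: "(X, Y, Z, f, g, h) \<in> dist C \<longleftrightarrow>
        (Y, Z, shO C X, g, h, mneg C (shM C f)) \<in> dist C"
  using triangulated unfolding triangulated_def by (elim conjE) blast

lemma dist_TR3:
  assumes "(X, Y, Z, f, g, h) \<in> dist C" "(X', Y', Z', f', g', h') \<in> dist C"
    and "a \<in> hom C X X'" "b \<in> hom C Y Y'" "cmp C b f = cmp C f' a"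
  shows "\<exists>c. c \<in> hom C Z Z' \<and> cmp C c g = cmp C g' b \<and> cmp C (shM C a) h = cmp C h' c"
proof -
  have "\<forall>X Y Z f g h X' Y' Z' f' g' h' a b.
        (X, Y, Z, f, g, h) \<in> dist C \<longrightarrow> (X', Y', Z', f', g', h') \<in> dist C \<longrightarrow>
        a \<in> hom C X X' \<longrightarrow> b \<in> hom C Y Y' \<longrightarrow> cmp C b f = cmp C f' a \<longrightarrow>
        (\<exists>c. tri_mor C (X, Y, Z, f, g, h) (X', Y', Z', f', g', h') a b c)"
    using triangulated unfolding triangulated_def by (elim conjE)
  then obtain c where "tri_mor C (X, Y, Z, f, g, h) (X', Y', Z', f', g', h') a b c"
    using assms by blast
  then show ?thesis unfolding tri_mor_def by auto
qed

lemma preadditive: "preadditive C" and zero_obj_exists: "\<exists>Z. zero_obj C Z"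
  using additive unfolding additive_def by simp_all

lemma category: "category C"
  using preadditive unfolding preadditive_def by simp

lemma hom_objs: assumes "f \<in> hom C X Y" shows "X \<in> Obj C" "Y \<in> Obj C"
  using category assms unfolding category_def hom_def by auto

lemma hom_Mor: "f \<in> hom C X Y \<Longrightarrow> f \<in> Mor C"
  by (simp add: hom_def)

lemma id_hom: "X \<in> Obj C \<Longrightarrow> idm C X \<in> hom C X X"
  using category unfolding category_def by (elim conjE) blast

lemma cmp_hom: "f \<in> hom C X Y \<Longrightarrow> g \<in> hom C Y Z \<Longrightarrow> cmp C g f \<in> hom C X Z"
  using category unfolding category_def by (elim conjE) blast

lemma cmp_assoc: "f \<in> hom C W X \<Longrightarrow> g \<in> hom C X Y \<Longrightarrow> h \<in> hom C Y Z \<Longrightarrow>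
    cmp C h (cmp C g f) = cmp C (cmp C h g) f"
  using category unfolding category_def by (elim conjE) blast

lemma cmp_id_right: "f \<in> hom C X Y \<Longrightarrow> cmp C f (idm C X) = f"
  and cmp_id_left: "f \<in> hom C X Y \<Longrightarrow> cmp C (idm C Y) f = f"
  using category unfolding category_def by (elim conjE; blast)+

lemma zero_hom: "X \<in> Obj C \<Longrightarrow> Y \<in> Obj C \<Longrightarrow> mzero C X Y \<in> hom C X Y"
  using preadditive unfolding preadditive_def by (elim conjE) blast

context
  fixes f g h :: 'm and X Y :: 'o
  assumes f: "f \<in> hom C X Y"
begin

lemma hom_abelian_group:
  "mneg C f \<in> hom C X Y \<and> madd C (mzero C X Y) f = f \<and> madd C f (mneg C f) = mzero C X Y \<and>
   (g \<in> hom C X Y \<longrightarrow> madd C f g \<in> hom C X Y \<and> madd C f g = madd C g f) \<and>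
   (g \<in> hom C X Y \<longrightarrow> h \<in> hom C X Y \<longrightarrow> madd C (madd C f g) h = madd C f (madd C g h))"
  using preadditive hom_objs[OF f] f unfolding preadditive_def by (elim conjE) blast

lemma add_hom: "g \<in> hom C X Y \<Longrightarrow> madd C f g \<in> hom C X Y"
  and neg_hom: "mneg C f \<in> hom C X Y"
  and add_assoc: "g \<in> hom C X Y \<Longrightarrow> h \<in> hom C X Y \<Longrightarrow>
        madd C (madd C f g) h = madd C f (madd C g h)"
  and add_commute: "g \<in> hom C X Y \<Longrightarrow> madd C f g = madd C g f"
  and zero_add: "madd C (mzero C X Y) f = f"
  and add_neg: "madd C f (mneg C f) = mzero C X Y"
  using hom_abelian_group by blast+

end

lemma cmp_add_left: "f \<in> hom C X Y \<Longrightarrow> g \<in> hom C Y Z \<Longrightarrow> g' \<in> hom C Y Z \<Longrightarrow>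
    cmp C (madd C g g') f = madd C (cmp C g f) (cmp C g' f)"
  using preadditive unfolding preadditive_def by (elim conjE) blast

lemma cmp_add_right: "f \<in> hom C X Y \<Longrightarrow> f' \<in> hom C X Y \<Longrightarrow> g \<in> hom C Y Z \<Longrightarrow>
    cmp C g (madd C f f') = madd C (cmp C g f) (cmp C g f')"
  using preadditive unfolding preadditive_def by (elim conjE) metis

lemma shO_obj: "X \<in> Obj C \<Longrightarrow> shO C X \<in> Obj C"
  and ushO_obj: "X \<in> Obj C \<Longrightarrow> ushO C X \<in> Obj C"
  and ushO_shO: "X \<in> Obj C \<Longrightarrow> ushO C (shO C X) = X"
  and shO_ushO: "X \<in> Obj C \<Longrightarrow> shO C (ushO C X) = X"
  using shift_auto unfolding shift_auto_def by (elim conjE; blast)+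

lemma shM_hom: "f \<in> hom C X Y \<Longrightarrow> shM C f \<in> hom C (shO C X) (shO C Y)"
  and ushM_hom: "f \<in> hom C X Y \<Longrightarrow> ushM C f \<in> hom C (ushO C X) (ushO C Y)"
  and ushM_shM: "f \<in> Mor C \<Longrightarrow> ushM C (shM C f) = f"
  and shM_ushM: "f \<in> Mor C \<Longrightarrow> shM C (ushM C f) = f"
  using shift_auto unfolding shift_auto_def by (elim conjE; blast)+

lemma shM_cmp: "f \<in> hom C X Y \<Longrightarrow> g \<in> hom C Y Z \<Longrightarrow>
    shM C (cmp C g f) = cmp C (shM C g) (shM C f)"
  using shift_auto unfolding shift_auto_def by (elim conjE) metis

lemma shM_id: "X \<in> Obj C \<Longrightarrow> shM C (idm C X) = idm C (shO C X)"
  using shift_auto unfolding shift_auto_def by (elim conjE) metis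

lemma shM_add: "f \<in> hom C X Y \<Longrightarrow> g \<in> hom C X Y \<Longrightarrow>
    shM C (madd C f g) = madd C (shM C f) (shM C g)"
  using shift_auto unfolding shift_auto_def by (elim conjE) metis

lemma dist_hom: assumes "(X, Y, Z, f, g, h) \<in> dist C"
  shows "f \<in> hom C X Y" "g \<in> hom C Y Z" "h \<in> hom C Z (shO C X)"
  using dist_triangle[OF assms] unfolding triangle_def by simp_all

lemma zero_obj_Obj: "zero_obj C Z \<Longrightarrow> Z \<in> Obj C"
  unfolding zero_obj_def by blast

lemma add_zero: "f \<in> hom C X Y \<Longrightarrow> madd C f (mzero C X Y) = f"
  using add_commute zero_add zero_hom hom_objs by metis

lemma add_left_cancel:
  assumes a: "a \<in> hom C X Y" and b: "b \<in> hom C X Y" and c: "c \<in> hom C X Y"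
    and eq: "madd C a b = madd C a c"
  shows "b = c"
proof -
  have na: "mneg C a \<in> hom C X Y" using neg_hom[OF a] .
  have inv: "madd C (mneg C a) a = mzero C X Y" using add_commute[OF na a] add_neg[OF a] by simp
  have "b = madd C (madd C (mneg C a) a) b" using inv zero_add[OF b] by simp
  also have "\<dots> = madd C (mneg C a) (madd C a c)" using add_assoc[OF na a b] eq by simp
  also have "\<dots> = c" using add_assoc[OF na a c] inv zero_add[OF c] by simp
  finally show ?thesis .
qed

lemma add_idem_eq_zero: "b \<in> hom C X Y \<Longrightarrow> madd C b b = b \<Longrightarrow> b = mzero C X Y"
  using add_left_cancel add_zero zero_hom hom_objs by metis

lemma neg_unique: "a \<in> hom C X Y \<Longrightarrow> b \<in> hom C X Y \<Longrightarrow> madd C a b = mzero C X Y \<Longrightarrow> b = mneg C a"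
  using add_left_cancel neg_hom add_neg by metis

lemma neg_neg: assumes a: "a \<in> hom C X Y" shows "mneg C (mneg C a) = a"
  using neg_unique[OF neg_hom[OF a] a] add_commute[OF neg_hom[OF a] a] add_neg[OF a] by simp

lemma neg_zero: "X \<in> Obj C \<Longrightarrow> Y \<in> Obj C \<Longrightarrow> mneg C (mzero C X Y) = mzero C X Y"
  using neg_unique zero_add zero_hom by metis

lemma cmp_zero_left: assumes f: "f \<in> hom C X Y" and Z: "Z \<in> Obj C"
  shows "cmp C (mzero C Y Z) f = mzero C X Z"
proof -
  have z: "mzero C Y Z \<in> hom C Y Z" using zero_hom hom_objs[OF f] Z by blast
  have "cmp C (mzero C Y Z) f = madd C (cmp C (mzero C Y Z) f) (cmp C (mzero C Y Z) f)"
    using cmp_add_left[OF f z z] zero_add[OF z] by simp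
  then show ?thesis using add_idem_eq_zero[OF cmp_hom[OF f z]] by simp
qed

lemma cmp_zero_right: assumes g: "g \<in> hom C Y Z" and X: "X \<in> Obj C"
  shows "cmp C g (mzero C X Y) = mzero C X Z"
proof -
  have z: "mzero C X Y \<in> hom C X Y" using zero_hom hom_objs[OF g] X by blast
  have "cmp C g (mzero C X Y) = madd C (cmp C g (mzero C X Y)) (cmp C g (mzero C X Y))"
    using cmp_add_right[OF z z g] zero_add[OF z] by simp
  then show ?thesis using add_idem_eq_zero[OF cmp_hom[OF z g]] by simp
qed

lemma cmp_neg_right: assumes f: "f \<in> hom C X Y" and g: "g \<in> hom C Y Z"
  shows "cmp C g (mneg C f) = mneg C (cmp C g f)"
proof -
  have "madd C (cmp C g f) (cmp C g (mneg C f)) = cmp C g (madd C f (mneg C f))"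
    using cmp_add_right[OF f neg_hom[OF f] g] by simp
  also have "\<dots> = mzero C X Z" using add_neg[OF f] cmp_zero_right[OF g] hom_objs[OF f] by simp
  finally show ?thesis using neg_unique[OF cmp_hom[OF f g] cmp_hom[OF neg_hom[OF f] g]] by simp
qed

lemma cmp_neg_left: assumes f: "f \<in> hom C X Y" and g: "g \<in> hom C Y Z"
  shows "cmp C (mneg C g) f = mneg C (cmp C g f)"
proof -
  have "madd C (cmp C g f) (cmp C (mneg C g) f) = cmp C (madd C g (mneg C g)) f"
    using cmp_add_left[OF f g neg_hom[OF g]] by simp
  also have "\<dots> = mzero C X Z" using add_neg[OF g] cmp_zero_left[OF f] hom_objs[OF g] by simp
  finally show ?thesis using neg_unique[OF cmp_hom[OF f g] cmp_hom[OF f neg_hom[OF g]]] by simp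
qed

lemma shM_zero: assumes "X \<in> Obj C" "Y \<in> Obj C"
  shows "shM C (mzero C X Y) = mzero C (shO C X) (shO C Y)"
proof -
  have z: "mzero C X Y \<in> hom C X Y" using zero_hom assms .
  have "shM C (mzero C X Y) = madd C (shM C (mzero C X Y)) (shM C (mzero C X Y))"
    using shM_add[OF z z] zero_add[OF z] by simp
  then show ?thesis using add_idem_eq_zero[OF shM_hom[OF z]] by simp
qed

lemma ushM_zero: assumes "X \<in> Obj C" "Y \<in> Obj C"
  shows "ushM C (mzero C X Y) = mzero C (ushO C X) (ushO C Y)"
  using shM_zero[OF ushO_obj ushO_obj] ushM_shM[OF hom_Mor[OF zero_hom[OF ushO_obj ushO_obj]]]
    assms shO_ushO by metis

lemma shM_inj: "f \<in> Mor C \<Longrightarrow> g \<in> Mor C \<Longrightarrow> shM C f = shM C g \<Longrightarrow> f = g"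
  using ushM_shM by metis

section \<open>Distinguished triangles\<close>

lemma dist_rotate_back:
  assumes t: "(Y, Z, shO C X, g, h, h') \<in> dist C" and X: "X \<in> Obj C"
  shows "(X, Y, Z, ushM C (mneg C h'), g, h) \<in> dist C"
proof -
  have h': "h' \<in> hom C (shO C X) (shO C Y)" using dist_hom(3)[OF t] .
  have "mneg C (shM C (ushM C (mneg C h'))) = h'"
    using shM_ushM[OF hom_Mor[OF neg_hom[OF h']]] neg_neg[OF h'] by simp
  then show ?thesis using dist_rotate[of X Y Z "ushM C (mneg C h')" g h] t by simp
qed

lemma dist_cmp_zero: assumes t: "(X, Y, Z, f, g, h) \<in> dist C" shows "cmp C g f = mzero C X Z"
proof -
  obtain Z0 where z0: "zero_obj C Z0" using zero_obj_exists by blast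
  have f: "f \<in> hom C X Y" using dist_hom[OF t] by simp
  then have X: "X \<in> Obj C" using hom_objs by blast
  obtain c where c: "c \<in> hom C Z0 Z" "cmp C c (mzero C X Z0) = cmp C g f"
    using dist_TR3[OF dist_TR1[OF X z0] t id_hom[OF X] f] cmp_id_right[OF f] by blast
  then show ?thesis using cmp_zero_right[OF c(1) X] by simp
qed

lemma dist_zero_neg_id: assumes z0: "zero_obj C Z0" and E: "E \<in> Obj C"
  shows "\<exists>k. (Z0, E, E, mzero C Z0 E, mneg C (idm C E), k) \<in> dist C"
proof -
  have "(ushO C E, Z0, E, mzero C (ushO C E) Z0, mzero C Z0 E, mneg C (idm C E)) \<in> dist C"
    using dist_TR1[OF ushO_obj[OF E] z0] dist_rotate shM_id[OF ushO_obj[OF E]] shO_ushO[OF E]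
    by metis
  then show ?thesis using dist_rotate shO_ushO[OF E] by metis
qed

lemma dist_weak_cokernel:
  assumes t: "(X, Y, Z, f, g, h) \<in> dist C" and y: "y \<in> hom C Y E"
    and yf: "cmp C y f = mzero C X E"
  shows "\<exists>z \<in> hom C Z E. cmp C z g = y"
proof -
  obtain Z0 where z0: "zero_obj C Z0" using zero_obj_exists by blast
  have E: "E \<in> Obj C" using hom_objs y by blast
  have f: "f \<in> hom C X Y" and g: "g \<in> hom C Y Z" using dist_hom[OF t] by auto
  have X: "X \<in> Obj C" using hom_objs f by blast
  have 0: "mzero C X Z0 \<in> hom C X Z0" using zero_hom[OF X zero_obj_Obj[OF z0]] .
  obtain k where t0: "(Z0, E, E, mzero C Z0 E, mneg C (idm C E), k) \<in> dist C"
    using dist_zero_neg_id[OF z0 E] by blast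
  have "cmp C y f = cmp C (mzero C Z0 E) (mzero C X Z0)"
    using yf cmp_zero_left[OF 0 E] by simp
  then obtain c where c: "c \<in> hom C Z E" "cmp C c g = cmp C (mneg C (idm C E)) y"
    using dist_TR3[OF t t0 0 y] by blast
  have "cmp C c g = mneg C y" using c(2) cmp_neg_left[OF y id_hom[OF E]] cmp_id_left[OF y] by simp
  then have "cmp C (mneg C c) g = y" using cmp_neg_left[OF g c(1)] neg_neg[OF y] by simp
  then show ?thesis using neg_hom[OF c(1)] by blast
qed

text \<open>Completion only produces the third map of a morphism of triangles, so both triangles are
  rotated once to make the wanted map, shifted, the third one.\<close>
lemma dist_weak_kernel:
  assumes t: "(X, Y, Z, f, g, h) \<in> dist C" and x: "x \<in> hom C D Y"
    and gx: "cmp C g x = mzero C D Z"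
  shows "\<exists>w \<in> hom C D X. cmp C f w = x"
proof -
  obtain Z0 where z0: "zero_obj C Z0" using zero_obj_exists by blast
  have D: "D \<in> Obj C" using hom_objs x by blast
  have f: "f \<in> hom C X Y" and g: "g \<in> hom C Y Z" using dist_hom[OF t] by auto
  have X: "X \<in> Obj C" and Z: "Z \<in> Obj C" using hom_objs f g by auto
  have 0: "mzero C Z0 Z \<in> hom C Z0 Z" using zero_hom[OF zero_obj_Obj[OF z0] Z] .
  have t0: "(D, Z0, shO C D, mzero C D Z0, mzero C Z0 (shO C D), mneg C (idm C (shO C D))) \<in> dist C"
    using dist_TR1[OF D z0] dist_rotate shM_id[OF D] by metis
  have "cmp C (mzero C Z0 Z) (mzero C D Z0) = cmp C g x"
    using gx cmp_zero_left[OF zero_hom[OF D zero_obj_Obj[OF z0]] Z] by simp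
  then obtain c where c: "c \<in> hom C (shO C D) (shO C X)"
     "cmp C (shM C x) (mneg C (idm C (shO C D))) = cmp C (mneg C (shM C f)) c"
    using dist_TR3[OF t0 t[THEN dist_rotate[THEN iffD1]] x 0] by blast
  have sx: "shM C x \<in> hom C (shO C D) (shO C Y)" using shM_hom[OF x] .
  have sf: "shM C f \<in> hom C (shO C X) (shO C Y)" using shM_hom[OF f] .
  have "mneg C (shM C x) = mneg C (cmp C (shM C f) c)"
    using c(2) cmp_neg_right[OF id_hom[OF shO_obj[OF D]] sx] cmp_id_right[OF sx]
      cmp_neg_left[OF c(1) sf] by simp
  then have eq: "shM C x = cmp C (shM C f) c"
    using neg_neg[OF sx] neg_neg[OF cmp_hom[OF c(1) sf]] by metis
  have w: "ushM C c \<in> hom C D X" using ushM_hom[OF c(1)] ushO_shO D X by simp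
  have "shM C (cmp C f (ushM C c)) = shM C x"
    using shM_cmp[OF w f] shM_ushM[OF hom_Mor[OF c(1)]] eq by simp
  then have "cmp C f (ushM C c) = x"
    using shM_inj[OF hom_Mor[OF cmp_hom[OF w f]] hom_Mor[OF x]] by simp
  then show ?thesis using w by blast
qed

lemma dist_section:
  assumes t: "(D, A, B, k, p, q) \<in> dist C" and q0: "q = mzero C B (shO C D)"
  shows "\<exists>s \<in> hom C B A. cmp C p s = idm C B"
proof -
  have q: "q \<in> hom C B (shO C D)" using dist_hom[OF t] by simp
  then have B: "B \<in> Obj C" using hom_objs by blast
  have "cmp C q (idm C B) = mzero C B (shO C D)" using cmp_id_right[OF q] q0 by simp
  then show ?thesis
    using dist_weak_kernel[OF t[THEN dist_rotate[THEN iffD1]] id_hom[OF B]] by blast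
qed

lemma dist_mono:
  assumes t: "(D, A, B, k, p, q) \<in> dist C" and q0: "q = mzero C B (shO C D)"
    and d: "d \<in> hom C D' D" and kd: "cmp C k d = mzero C D' A"
  shows "d = mzero C D' D"
proof -
  have p: "p \<in> hom C A B" and q: "q \<in> hom C B (shO C D)" using dist_hom[OF t] by simp_all
  have D: "D \<in> Obj C" and B: "B \<in> Obj C" using hom_objs d p by auto
  have "(ushO C B, D, A, ushM C (mneg C q), k, p) \<in> dist C"
    using dist_rotate_back[of D A "ushO C B" k p q] t shO_ushO[OF B] ushO_obj[OF B] by simp
  moreover have "ushM C (mneg C q) = mzero C (ushO C B) D"
    using q0 neg_zero[OF B shO_obj[OF D]] ushM_zero[OF B shO_obj[OF D]] ushO_shO[OF D] by simp
  ultimately obtain w where "w \<in> hom C D' (ushO C B)" "d = cmp C (mzero C (ushO C B) D) w"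
    using dist_weak_kernel[OF _ d kd] by metis
  then show ?thesis using cmp_zero_left D by simp
qed

text \<open>With a section s of p, the idempotent 1 - s p is killed by p and hence factors as k r;
  the retraction r of k is then forced by the monomorphy of k.\<close>
lemma dist_split_biprod:
  assumes t: "(D, A, B, k, p, q) \<in> dist C" and q0: "q = mzero C B (shO C D)"
  shows "\<exists>r s. biprod C B D A p r s k"
proof -
  have k: "k \<in> hom C D A" and p: "p \<in> hom C A B" using dist_hom[OF t] by simp_all
  have D: "D \<in> Obj C" and A: "A \<in> Obj C" and B: "B \<in> Obj C" using hom_objs k p by auto
  obtain s where s: "s \<in> hom C B A" "cmp C p s = idm C B" using dist_section[OF t q0] by blast
  define sp where "sp = cmp C s p"
  define e where "e = madd C (idm C A) (mneg C sp)"
  have sp: "sp \<in> hom C A A" unfolding sp_def using cmp_hom[OF p s(1)] .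
  have nsp: "mneg C sp \<in> hom C A A" using neg_hom[OF sp] .
  have e: "e \<in> hom C A A" unfolding e_def using add_hom[OF id_hom[OF A] nsp] .
  have psp: "cmp C p sp = p" unfolding sp_def using cmp_assoc[OF p s(1) p] s(2) cmp_id_left[OF p] by simp
  have "cmp C p e = madd C p (mneg C p)"
    unfolding e_def using cmp_add_right[OF id_hom[OF A] nsp p] cmp_id_right[OF p] cmp_neg_right[OF sp p] psp
    by simp
  then have "cmp C p e = mzero C A B" using add_neg[OF p] by simp
  then obtain r where r: "r \<in> hom C A D" "cmp C k r = e" using dist_weak_kernel[OF t e] by blast
  have spk: "cmp C sp k = mzero C D A"
    unfolding sp_def using cmp_assoc[OF k p s(1)] dist_cmp_zero[OF t] cmp_zero_right[OF s(1) D] by simp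
  have ek: "cmp C e k = k"
    unfolding e_def using cmp_add_left[OF k id_hom[OF A] nsp] cmp_id_left[OF k] cmp_neg_left[OF k sp] spk
      neg_zero[OF D A] add_zero[OF k] by simp
  have rk: "cmp C r k \<in> hom C D D" using cmp_hom[OF k r(1)] .
  have nid: "mneg C (idm C D) \<in> hom C D D" using neg_hom[OF id_hom[OF D]] .
  have "cmp C k (madd C (cmp C r k) (mneg C (idm C D))) = madd C k (mneg C k)"
    using cmp_add_right[OF rk nid k] cmp_assoc[OF k r(1) k] r(2) ek cmp_neg_right[OF id_hom[OF D] k]
      cmp_id_right[OF k] by simp
  then have "madd C (cmp C r k) (mneg C (idm C D)) = mzero C D D"
    using dist_mono[OF t q0 add_hom[OF rk nid]] add_neg[OF k] by simp
  then have "mneg C (idm C D) = mneg C (cmp C r k)" using neg_unique[OF rk nid] by simp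
  then have rk1: "cmp C r k = idm C D" using neg_neg[OF rk] neg_neg[OF id_hom[OF D]] by metis
  have "madd C sp e = madd C (madd C sp (mneg C sp)) (idm C A)"
    unfolding e_def using add_commute[OF id_hom[OF A] nsp] add_assoc[OF sp nsp id_hom[OF A]] by simp
  then have "madd C (cmp C s p) (cmp C k r) = idm C A"
    using add_neg[OF sp] zero_add[OF id_hom[OF A]] sp_def r(2) by simp
  then have "biprod C B D A p r s k"
    unfolding biprod_def using B D A p r(1) s k rk1 by blast
  then show ?thesis by blast
qed

section \<open>Cotorsion pairs\<close>

lemma hom_vanishI:
  assumes "A \<subseteq> Obj C" "B \<subseteq> Obj C"
    and "\<And>X Y f. X \<in> A \<Longrightarrow> Y \<in> B \<Longrightarrow> f \<in> hom C X Y \<Longrightarrow> f = mzero C X Y"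
  shows "hom_vanish C A B"
  using assms zero_hom unfolding hom_vanish_def by blast

lemma hom_vanish_unshift:
  assumes hv: "hom_vanish C A (shift_set C B)" and A: "A \<subseteq> Obj C" and B: "B \<subseteq> Obj C"
  shows "hom_vanish C (unshift_set C A) B"
proof (rule hom_vanishI)
  show "unshift_set C A \<subseteq> Obj C" using A ushO_obj unfolding unshift_set_def by blast
  fix X Y f assume "X \<in> unshift_set C A" and Y: "Y \<in> B" and f: "f \<in> hom C X Y"
  then obtain X0 where X0: "X0 \<in> A" "X = ushO C X0" unfolding unshift_set_def by blast
  have X0o: "X0 \<in> Obj C" and Yo: "Y \<in> Obj C" using A B X0 Y by auto
  have "shM C f \<in> hom C X0 (shO C Y)" using shM_hom[OF f] X0 shO_ushO[OF X0o] by simp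
  then have "shM C f = shM C (mzero C X Y)"
    using hom_vanishD[OF hv X0(1)] Y shM_zero[OF ushO_obj[OF X0o] Yo] X0 shO_ushO[OF X0o]
    unfolding shift_set_def by auto
  then show "f = mzero C X Y"
    using shM_inj[OF hom_Mor[OF f] hom_Mor[OF zero_hom[OF hom_objs[OF f]]]] by simp
qed (use B in simp)

lemma cotorsion_pair_left_memI:
  assumes cp: "cotorsion_pair C A B" and X: "X \<in> Obj C"
    and hv: "hom_vanish C {X} (shift_set C B)"
  shows "X \<in> A"
proof -
  have gA: "good_subcat C A" and "B \<subseteq> Obj C" and "X \<in> ext C A (shift_set C B)"
    using cp X unfolding cotorsion_pair_def good_subcat_def by auto
  then obtain A0 B0 p q r where A0: "A0 \<in> A" and B0: "B0 \<in> B" and B0o: "B0 \<in> Obj C"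
    and t: "(A0, X, shO C B0, p, q, r) \<in> dist C"
    unfolding ext_def shift_set_def by blast
  have "q = mzero C X (shO C B0)"
    using hom_vanishD[OF hv _ _ dist_hom(2)[OF t]] B0 unfolding shift_set_def by blast
  moreover have "(B0, A0, X, ushM C (mneg C r), p, q) \<in> dist C"
    using dist_rotate_back[OF t B0o] .
  ultimately obtain p' s where "biprod C X B0 A0 p p' s (ushM C (mneg C r))"
    using dist_split_biprod by blast
  then show ?thesis using good_subcat_summands(1)[OF gA _ A0] by blast
qed


lemma cotorsion_pair_right_memI:
  assumes cp: "cotorsion_pair C A B" and X: "X \<in> Obj C"
    and hv: "hom_vanish C (unshift_set C A) {X}"
  shows "X \<in> B"
proof -
  have gB: "good_subcat C B" and "A \<subseteq> Obj C" "B \<subseteq> Obj C"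
    and "shO C X \<in> ext C A (shift_set C B)"
    using cp shO_obj[OF X] unfolding cotorsion_pair_def good_subcat_def by auto
  then obtain A0 B0 f g h where A0: "A0 \<in> A" "A0 \<in> Obj C" and B0: "B0 \<in> B" "B0 \<in> Obj C"
    and t: "(A0, shO C X, shO C B0, f, g, h) \<in> dist C"
    unfolding ext_def shift_set_def by blast
  have f: "f \<in> hom C A0 (shO C X)" using dist_hom(1)[OF t] .
  have "ushM C f = mzero C (ushO C A0) X"
    using hom_vanishD[OF hv _ _ ushM_hom[OF f]] ushO_shO[OF X] A0 unfolding unshift_set_def by auto
  then have "f = mzero C A0 (shO C X)"
    using shM_ushM[OF hom_Mor[OF f]] shM_zero[OF ushO_obj[OF A0(2)] X] shO_ushO[OF A0(2)] by simp
  moreover have "(X, B0, A0, ushM C (mneg C g), ushM C (mneg C h), f) \<in> dist C"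
    using dist_rotate_back[OF dist_rotate_back[OF t B0(2)] X] .
  ultimately obtain p s where "biprod C A0 X B0 (ushM C (mneg C h)) p s (ushM C (mneg C g))"
    using dist_split_biprod by blast
  then show ?thesis using good_subcat_summands(2)[OF gB _ B0(1)] by blast
qed

lemma ext_unshift_Int_ext_subset:
  assumes cp: "cotorsion_pair C U V" and hv: "hom_vanish C (unshift_set C S) T" and W: "W \<subseteq> U"
  shows "ext C (unshift_set C S) W \<inter> ext C U T \<subseteq> U"
proof
  fix X assume "X \<in> ext C (unshift_set C S) W \<inter> ext C U T"
  then obtain S0 W1 a b c U0 T0 u t h where S0: "S0 \<in> unshift_set C S" and W1: "W1 \<in> W"
    and tSW: "(S0, X, W1, a, b, c) \<in> dist C" and U0: "U0 \<in> U" and T0: "T0 \<in> T"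
    and tUT: "(U0, X, T0, u, t, h) \<in> dist C" and X: "X \<in> Obj C"
    unfolding ext_def by blast
  have hvUV: "hom_vanish C U (shift_set C V)" and VO: "V \<subseteq> Obj C"
    using cp unfolding cotorsion_pair_def good_subcat_def by auto
  have a: "a \<in> hom C S0 X" and b: "b \<in> hom C X W1" and u: "u \<in> hom C U0 X"
    and t: "t \<in> hom C X T0" using dist_hom tSW tUT by auto
  have "hom_vanish C {X} (shift_set C V)"
  proof (rule hom_vanishI)
    show "shift_set C V \<subseteq> Obj C" using VO shO_obj unfolding shift_set_def by blast
    fix X' Y q assume "X' \<in> {X}" and Y: "Y \<in> shift_set C V" and "q \<in> hom C X' Y"
    then have q: "q \<in> hom C X Y" by simp
    have "cmp C q u = mzero C U0 Y" using hom_vanishD[OF hvUV U0 Y cmp_hom[OF u q]] .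
    then obtain g where g: "g \<in> hom C T0 Y" "cmp C g t = q"
      using dist_weak_cokernel[OF tUT q] by blast
    have "cmp C t a = mzero C S0 T0" using hom_vanishD[OF hv S0 T0 cmp_hom[OF a t]] .
    then obtain \<tau> where \<tau>: "\<tau> \<in> hom C W1 T0" "cmp C \<tau> b = t"
      using dist_weak_cokernel[OF tSW t] by blast
    have "cmp C g \<tau> = mzero C W1 Y" using hom_vanishD[OF hvUV _ Y cmp_hom[OF \<tau>(1) g(1)]] W W1 by blast
    then show "q = mzero C X' Y"
      using cmp_assoc[OF b \<tau>(1) g(1)] \<tau>(2) g(2) cmp_zero_left[OF b] hom_objs(2)[OF q] \<open>X' \<in> {X}\<close>
      by simp
  qed (use X in simp)
  then show "X \<in> U" using cotorsion_pair_left_memI[OF cp X] by blast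
qed

lemma ext_shift_Int_ext_subset:
  assumes cp: "cotorsion_pair C S T" and hv: "hom_vanish C U (shift_set C V)" and W: "W \<subseteq> T"
  shows "ext C W (shift_set C V) \<inter> ext C U T \<subseteq> T"
proof
  fix X assume "X \<in> ext C W (shift_set C V) \<inter> ext C U T"
  then obtain W0 V1 w v r U0 T0 u t h where W0: "W0 \<in> W" and V1: "V1 \<in> shift_set C V"
    and tWV: "(W0, X, V1, w, v, r) \<in> dist C" and U0: "U0 \<in> U" and T0: "T0 \<in> T"
    and tUT: "(U0, X, T0, u, t, h) \<in> dist C" and X: "X \<in> Obj C"
    unfolding ext_def by blast
  have hvST: "hom_vanish C (unshift_set C S) T" and SO: "S \<subseteq> Obj C"
    using cp hom_vanish_unshift unfolding cotorsion_pair_def good_subcat_def by auto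
  have w: "w \<in> hom C W0 X" and v: "v \<in> hom C X V1" and u: "u \<in> hom C U0 X"
    and t: "t \<in> hom C X T0" using dist_hom tWV tUT by auto
  have "hom_vanish C (unshift_set C S) {X}"
  proof (rule hom_vanishI)
    show "unshift_set C S \<subseteq> Obj C" using SO ushO_obj unfolding unshift_set_def by blast
    fix S0 X' \<alpha> assume S0: "S0 \<in> unshift_set C S" and "X' \<in> {X}" and "\<alpha> \<in> hom C S0 X'"
    then have \<alpha>: "\<alpha> \<in> hom C S0 X" by simp
    have "cmp C t \<alpha> = mzero C S0 T0" using hom_vanishD[OF hvST S0 T0 cmp_hom[OF \<alpha> t]] .
    then obtain \<beta> where \<beta>: "\<beta> \<in> hom C S0 U0" "cmp C u \<beta> = \<alpha>"
      using dist_weak_kernel[OF tUT \<alpha>] by blast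
    have "cmp C v u = mzero C U0 V1" using hom_vanishD[OF hv U0 V1 cmp_hom[OF u v]] .
    then have "cmp C v \<alpha> = mzero C S0 V1"
      using \<beta> cmp_assoc[OF \<beta>(1) u v] cmp_zero_left[OF \<beta>(1)] hom_objs(2)[OF v] by simp
    then obtain \<gamma> where \<gamma>: "\<gamma> \<in> hom C S0 W0" "cmp C w \<gamma> = \<alpha>"
      using dist_weak_kernel[OF tWV \<alpha>] by blast
    have "\<gamma> = mzero C S0 W0" using hom_vanishD[OF hvST S0 _ \<gamma>(1)] W W0 by blast
    then show "\<alpha> = mzero C S0 X'"
      using \<gamma>(2) cmp_zero_right[OF w hom_objs(1)[OF \<alpha>]] \<open>X' \<in> {X}\<close> by simp
  qed (use X in simp)
  then show "X \<in> T" using cotorsion_pair_right_memI[OF cp X] by blast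
qed

lemma zero_obj_shO: assumes "zero_obj C Z" shows "zero_obj C (shO C Z)"
proof -
  have Z: "Z \<in> Obj C" "idm C Z = mzero C Z Z" using assms unfolding zero_obj_def by auto
  then show ?thesis using shM_id[OF Z(1)] shM_zero[OF Z(1) Z(1)] shO_obj[OF Z(1)]
    unfolding zero_obj_def by simp
qed

lemma zero_obj_ushO: assumes "zero_obj C Z" shows "zero_obj C (ushO C Z)"
proof -
  have Z: "Z \<in> Obj C" "idm C Z = mzero C Z Z" using assms unfolding zero_obj_def by auto
  have "idm C (ushO C Z) = ushM C (idm C Z)"
    using ushM_shM[OF hom_Mor[OF id_hom[OF ushO_obj[OF Z(1)]]]] shM_id[OF ushO_obj[OF Z(1)]]
      shO_ushO[OF Z(1)] by simp
  then show ?thesis using Z ushM_zero[OF Z(1) Z(1)] ushO_obj[OF Z(1)] unfolding zero_obj_def by simp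
qed

lemma subset_ext_left: "zero_obj C Z \<Longrightarrow> Z \<in> B \<Longrightarrow> A \<subseteq> Obj C \<Longrightarrow> A \<subseteq> ext C A B"
  unfolding ext_def using dist_TR1 by blast

lemma subset_ext_right: "zero_obj C Z \<Longrightarrow> Z \<in> A \<Longrightarrow> B \<subseteq> Obj C \<Longrightarrow> B \<subseteq> ext C A B"
  unfolding ext_def using dist_zero_neg_id by blast

lemma twin_cotorsion_core_subset_ext:
  assumes "twin_cotorsion_pair C S T U V"
  shows "U \<inter> T \<subseteq> ext C (U \<inter> T) (shift_set C V) \<inter> ext C (unshift_set C S) (U \<inter> T) \<inter> ext C U T"
proof -
  have S: "good_subcat C S" and T: "good_subcat C T" and U: "good_subcat C U" and V: "good_subcat C V"
    using assms unfolding twin_cotorsion_pair_def cotorsion_pair_def by blast+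
  have UO: "U \<subseteq> Obj C" using U unfolding good_subcat_def by blast
  obtain Z where Z: "zero_obj C Z" using zero_obj_exists by blast
  have ZS: "ushO C Z \<in> unshift_set C S" and ZT: "Z \<in> T" and ZV: "shO C Z \<in> shift_set C V"
    using Z S T V unfolding good_subcat_def unshift_set_def shift_set_def by auto
  have "U \<inter> T \<subseteq> ext C (U \<inter> T) (shift_set C V)"
    using subset_ext_left[OF zero_obj_shO[OF Z] ZV, of "U \<inter> T"] UO by blast
  moreover have "U \<inter> T \<subseteq> ext C (unshift_set C S) (U \<inter> T)"
    using subset_ext_right[OF zero_obj_ushO[OF Z] ZS, of "U \<inter> T"] UO by blast
  moreover have "U \<subseteq> ext C U T"
    using subset_ext_left[OF Z ZT UO] .
  ultimately show ?thesis by blast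
qed

end

theorem lemma2p6:
  fixes C :: "('o, 'm) tricat" and S T U V :: "'o set"
  assumes "triangulated C"
    and "twin_cotorsion_pair C S T U V"
  shows "let W = U \<inter> T;
             Cplus = ext C W (shift_set C V);
             Cminus = ext C (unshift_set C S) W;
             H = Cplus \<inter> Cminus
         in H \<inter> ext C U T = W"
proof -
  interpret triangulated_category C by (rule triangulated_category.intro) fact
  have ST: "cotorsion_pair C S T" and UV: "cotorsion_pair C U V"
    using assms(2) unfolding twin_cotorsion_pair_def by blast+
  then have hvUV: "hom_vanish C U (shift_set C V)" and "hom_vanish C S (shift_set C T)"
    and "good_subcat C S" "good_subcat C T"
    unfolding cotorsion_pair_def by blast+
  then have hvST: "hom_vanish C (unshift_set C S) T"
    using hom_vanish_unshift[of S T] unfolding good_subcat_def by blast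
  have "ext C (unshift_set C S) (U \<inter> T) \<inter> ext C U T \<subseteq> U"
    using ext_unshift_Int_ext_subset[OF UV hvST] by blast
  moreover have "ext C (U \<inter> T) (shift_set C V) \<inter> ext C U T \<subseteq> T"
    using ext_shift_Int_ext_subset[OF ST hvUV] by blast
  ultimately show ?thesis
    using twin_cotorsion_core_subset_ext[OF assms(2)] unfolding Let_def by blast
qed

end
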